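(* Let $T_1\subseteq T_2\subseteq\cdots$ be well ordered sets, each $T_n$ carrying the restriction of the order of $T_{n+1}$, all having the same minimum and the same maximum. Let $T=\bigcup_n T_n$ with the induced linear order and let $\bar T$ be its completion. Define $d:\bar T\times\bar T\to[0,+\infty)$ by $d(x,x)=0$, $d(x,y)=d(y,x)=\dfrac{1}{\min\{n: \,]x,y]\cap T_n\neq\emptyset\}}$ for $x<y$. Then $d$ is a well-defined metric on $\bar T$; it is a Reznichenko metric, i.e. for any distinct $x,y\in\bar T$ there are neighborhoods $U\ni x$, $V\ni y$ with $\inf\{d(u,v):u\in U,v\in V\}>0$; and $d$ fragments $\bar T$ (with the order topology).
   Context: The completion of a linearly ordered set $T$ is the unique linearly ordered set $\bar T\supseteq T$ (extending the order of $T$) such that $\bar T$ is compact in its order topology and $]x,y]\cap T\neq\emptyset$ for all $x<y$ in $\bar T$, where $]x,y]=\{z:x<z\le y\}$. A map $d$ fragments a topological space $K$ if for every nonempty closed $L\subseteq K$ and every $\varepsilon>0$ there is a nonempty relatively open $U\subseteq L$ with $\sup\{d(x,y):x,y\in U\}<\varepsilon$. *)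

theory Defs
  imports "HOL-Analysis.Analysis"
begin

definition well_ordered_set :: "'a::linorder set \<Rightarrow> bool" where
  "well_ordered_set S \<longleftrightarrow> (\<forall>A. A \<subseteq> S \<longrightarrow> A \<noteq> {} \<longrightarrow> (\<exists>a\<in>A. \<forall>b\<in>A. a \<le> b))"

text \<open>The ambient type (a linear order carrying its order topology) is the completion of T:
  it is compact and every half-open interval ]x,y] with x<y meets T.\<close>
definition is_completion_of :: "'a::linorder_topology set \<Rightarrow> bool" where
  "is_completion_of T \<longleftrightarrow> compact (UNIV :: 'a set) \<and> (\<forall>x y. x < y \<longrightarrow> {x<..y} \<inter> T \<noteq> {})"

text \<open>The metric d; index n :: nat stands for the paper's T_(n+1).\<close>
definition chain_metric :: "(nat \<Rightarrow> 'a::linorder set) \<Rightarrow> 'a \<Rightarrow> 'a \<Rightarrow> real" where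
  "chain_metric T x y = (if x = y then 0
     else 1 / real (Suc (LEAST n. {min x y<..max x y} \<inter> T n \<noteq> {})))"

definition fragments :: "('a::topological_space \<Rightarrow> 'a \<Rightarrow> real) \<Rightarrow> 'a set \<Rightarrow> bool" where
  "fragments d K \<longleftrightarrow> (\<forall>L. closedin (top_of_set K) L \<longrightarrow> L \<noteq> {} \<longrightarrow>
     (\<forall>\<epsilon>>0. \<exists>U. openin (top_of_set L) U \<and> U \<noteq> {} \<and>
        Sup {d x y | x y. x \<in> U \<and> y \<in> U} < \<epsilon>))"

end

theory Submission
  imports Defs
begin

(* - Completeness of the union makes every ]x,y] with x < y meet some level, so N
     is well defined.  A witness w \<in> T N in ]min x z, max x z] lies in one of the
     two intervals determined by y, which gives d x z \<le> max (d x y) (d y z).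
   - Reznichenko: two distinct points are separated by open sets U < t \<le> V around
     a point t of the union; every u \<in> U, v \<in> V then has d u v \<ge> 1/(n+1) for the
     level n of t.
   - Fragmentation: a nonempty closed L is compact and has a least element p.  As
     T n is well ordered, some open W \<ni> p has ]p,w] \<inter> T n = {} for all w \<in> W, so
     all distances within L \<inter> W are at most 1/(n+1). *)

section \<open>Elementary properties of the chain metric\<close>

lemma completion_interval_meets_level:
  assumes "is_completion_of (\<Union>n. T n)" and "x < y"
  shows "\<exists>n. {x<..y} \<inter> T n \<noteq> {}"
  using assms unfolding is_completion_of_def by blast

lemma chain_metric_nonneg: "chain_metric T x y \<ge> 0"
  by (simp add: chain_metric_def)

lemma chain_metric_same: "chain_metric T x x = 0"
  by (simp add: chain_metric_def)

lemma chain_metric_eq_0_iff: "chain_metric T x y = 0 \<longleftrightarrow> x = y"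
  by (simp add: chain_metric_def)

lemma chain_metric_sym: "chain_metric T x y = chain_metric T y x"
  by (auto simp: chain_metric_def min.commute max.commute)

lemma chain_metric_lower:
  assumes "x \<noteq> y" and "{min x y<..max x y} \<inter> T n \<noteq> {}"
  shows "1 / real (Suc n) \<le> chain_metric T x y"
proof -
  have "(LEAST n. {min x y<..max x y} \<inter> T n \<noteq> {}) \<le> n"
    using assms(2) by (rule Least_le)
  then show ?thesis
    using assms(1) by (simp add: chain_metric_def frac_le)
qed

lemma chain_metric_upper:
  assumes mono: "\<And>n. T n \<subseteq> T (Suc n)"
    and "x \<noteq> y" and meets: "\<exists>k. {min x y<..max x y} \<inter> T k \<noteq> {}"
    and misses: "{min x y<..max x y} \<inter> T n = {}"
  shows "chain_metric T x y \<le> 1 / real (Suc n)"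
proof -
  define N where "N = (LEAST k. {min x y<..max x y} \<inter> T k \<noteq> {})"
  have meets_N: "{min x y<..max x y} \<inter> T N \<noteq> {}"
    unfolding N_def using meets by (rule LeastI_ex)
  have "n \<le> N"
  proof (rule ccontr)
    assume "\<not> n \<le> N"
    then have "T N \<subseteq> T n"
      using lift_Suc_mono_le[of T N n] mono by simp
    with meets_N misses show False
      by blast
  qed
  then show ?thesis
    using \<open>x \<noteq> y\<close> by (simp add: chain_metric_def N_def frac_le)
qed

lemma chain_metric_across_point:
  assumes "t \<in> T n" and "u < t" and "t \<le> v"
  shows "1 / real (Suc n) \<le> chain_metric T u v"
  using assms by (intro chain_metric_lower) auto

lemma chain_metric_ultrametric:
  assumes meets: "\<And>a b. a < b \<Longrightarrow> \<exists>n. {a<..b} \<inter> T n \<noteq> {}"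
  shows "chain_metric T x z \<le> max (chain_metric T x y) (chain_metric T y z)"
proof (cases "x = z \<or> x = y \<or> y = z")
  case True
  then show ?thesis
    by (auto simp: chain_metric_same chain_metric_nonneg le_max_iff_disj)
next
  case False
  define N where "N = (LEAST n. {min x z<..max x z} \<inter> T n \<noteq> {})"
  have "min x z < max x z"
    using False by (auto simp: min_def max_def)
  then have "\<exists>n. {min x z<..max x z} \<inter> T n \<noteq> {}"
    by (rule meets)
  then have "{min x z<..max x z} \<inter> T N \<noteq> {}"
    unfolding N_def by (rule LeastI_ex)
  then obtain w where w: "w \<in> {min x z<..max x z}" "w \<in> T N"
    by blast
  have dxz: "chain_metric T x z = 1 / real (Suc N)"
    using False by (simp add: chain_metric_def N_def)
  have "w \<in> {min x y<..max x y} \<or> w \<in> {min y z<..max y z}"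
    using w(1) by (auto simp: min_def max_def split: if_splits)
  then have "1 / real (Suc N) \<le> chain_metric T x y \<or> 1 / real (Suc N) \<le> chain_metric T y z"
  proof
    assume "w \<in> {min x y<..max x y}"
    then have "1 / real (Suc N) \<le> chain_metric T x y"
      using w(2) False by (intro chain_metric_lower) auto
    then show ?thesis ..
  next
    assume "w \<in> {min y z<..max y z}"
    then have "1 / real (Suc N) \<le> chain_metric T y z"
      using w(2) False by (intro chain_metric_lower) auto
    then show ?thesis ..
  qed
  then show ?thesis
    unfolding dxz le_max_iff_disj .
qed

lemma chain_metric_triangle:
  assumes "\<And>a b. a < b \<Longrightarrow> \<exists>n. {a<..b} \<inter> T n \<noteq> {}"
  shows "chain_metric T x z \<le> chain_metric T x y + chain_metric T y z"
proof -
  have "max (chain_metric T x y) (chain_metric T y z) \<le> chain_metric T x y + chain_metric T y z"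
    using chain_metric_nonneg[of T x y] chain_metric_nonneg[of T y z] by (simp add: max_def)
  with chain_metric_ultrametric[of T x z y, OF assms] show ?thesis
    by linarith
qed

section \<open>The Reznichenko property\<close>

lemma separating_cut:
  fixes x y :: "'a::linorder_topology"
  assumes dense: "\<And>a b. a < b \<Longrightarrow> {a<..b} \<inter> X \<noteq> {}" and "x < y"
  obtains t U V where "t \<in> X" "open U" "x \<in> U" "open V" "y \<in> V"
    "\<And>u. u \<in> U \<Longrightarrow> u < t" "\<And>v. v \<in> V \<Longrightarrow> t \<le> v"
proof (cases "\<exists>s. x < s \<and> s < y")
  case True
  then obtain s where "x < s" "s < y"
    by blast
  moreover obtain t where "t \<in> {x<..s}" "t \<in> X"
    using dense[OF \<open>x < s\<close>] by blast
  ultimately show ?thesis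
    by (intro that[of t "{..<t}" "{t<..}"]) auto
next
  case False
  obtain t where t: "t \<in> {x<..y}" "t \<in> X"
    using dense[OF \<open>x < y\<close>] by blast
  with False have "t = y"
    by force
  have above: "y \<le> v" if "x < v" for v
    using False that by (meson not_less)
  from t \<open>t = y\<close> \<open>x < y\<close> show ?thesis
    by (intro that[of y "{..<y}" "{x<..}"]) (auto intro: above)
qed

lemma chain_metric_separated:
  fixes T :: "nat \<Rightarrow> 'a::linorder_topology set"
  assumes compl: "is_completion_of (\<Union>n. T n)" and "x \<noteq> y"
  shows "\<exists>U V e. open U \<and> x \<in> U \<and> open V \<and> y \<in> V \<and> e > 0 \<and>
           (\<forall>u\<in>U. \<forall>v\<in>V. e \<le> chain_metric T u v)"
proof -
  have dense: "\<And>a b. a < b \<Longrightarrow> {a<..b} \<inter> (\<Union>n. T n) \<noteq> {}"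
    using compl unfolding is_completion_of_def by blast
  have ordered: "\<exists>U V e. open U \<and> a \<in> U \<and> open V \<and> b \<in> V \<and> e > 0 \<and>
           (\<forall>u\<in>U. \<forall>v\<in>V. e \<le> chain_metric T u v \<and> e \<le> chain_metric T v u)"
    if "a < b" for a b
  proof -
    obtain t U V where t: "t \<in> (\<Union>n. T n)" and UV: "open U" "a \<in> U" "open V" "b \<in> V"
      and cut: "\<And>u. u \<in> U \<Longrightarrow> u < t" "\<And>v. v \<in> V \<Longrightarrow> t \<le> v"
      using separating_cut[OF dense \<open>a < b\<close>] by blast
    from t obtain n where "t \<in> T n"
      by blast
    have "\<forall>u\<in>U. \<forall>v\<in>V. 1 / real (Suc n) \<le> chain_metric T u v \<and>
                                1 / real (Suc n) \<le> chain_metric T v u"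
    proof (intro ballI conjI)
      fix u v assume "u \<in> U" "v \<in> V"
      then show "1 / real (Suc n) \<le> chain_metric T u v"
        using \<open>t \<in> T n\<close> cut by (intro chain_metric_across_point)
      then show "1 / real (Suc n) \<le> chain_metric T v u"
        by (simp only: chain_metric_sym)
    qed
    then show ?thesis
      using UV by (intro exI[of _ U] exI[of _ V] exI[of _ "1 / real (Suc n)"]) simp
  qed
  show ?thesis
  proof (cases "x < y")
    case True
    then show ?thesis
      using ordered[of x y] by meson
  next
    case False
    then have "y < x"
      using \<open>x \<noteq> y\<close> by simp
    then show ?thesis
      using ordered[of y x] by meson
  qed
qed

lemma Inf_pos_of_uniform_lower_bound:
  fixes f :: "'a \<Rightarrow> 'b \<Rightarrow> real"
  assumes "u0 \<in> U" "v0 \<in> V" "e > 0" "\<forall>u\<in>U. \<forall>v\<in>V. e \<le> f u v"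
  shows "Inf {f u v | u v. u \<in> U \<and> v \<in> V} > 0"
proof -
  have "e \<le> Inf {f u v | u v. u \<in> U \<and> v \<in> V}"
    using assms by (intro cInf_greatest) blast+
  with \<open>e > 0\<close> show ?thesis
    by linarith
qed

lemma chain_metric_reznichenko:
  fixes T :: "nat \<Rightarrow> 'a::linorder_topology set"
  assumes "is_completion_of (\<Union>n. T n)" and "x \<noteq> y"
  shows "\<exists>U V. open U \<and> x \<in> U \<and> open V \<and> y \<in> V \<and>
           Inf {chain_metric T u v | u v. u \<in> U \<and> v \<in> V} > 0"
proof -
  obtain U V e where "open U" "x \<in> U" "open V" "y \<in> V" "e > 0"
    and "\<forall>u\<in>U. \<forall>v\<in>V. e \<le> chain_metric T u v"
    using chain_metric_separated[OF assms] by blast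
  then show ?thesis
    using Inf_pos_of_uniform_lower_bound[of x U y V e] by blast
qed

section \<open>Fragmentation\<close>

lemma well_ordered_right_gap:
  fixes S :: "'a::linorder_topology set"
  assumes wo: "well_ordered_set S"
  obtains W where "open W" "p \<in> W" "\<And>w. w \<in> W \<Longrightarrow> {p<..w} \<inter> S = {}"
proof (cases "\<exists>s\<in>S. p < s")
  case True
  then obtain s0 where s0: "s0 \<in> S" "p < s0" and least: "\<And>s. s \<in> S \<Longrightarrow> p < s \<Longrightarrow> s0 \<le> s"
    using wo unfolding well_ordered_set_def
    by (drule_tac x = "{s\<in>S. p < s}" in spec) auto
  have "{p<..w} \<inter> S = {}" if "w < s0" for w
    using least that by fastforce
  with s0 show ?thesis
    by (intro that[of "{..<s0}"]) auto
next
  case False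
  then show ?thesis
    by (intro that[of UNIV]) auto
qed

lemma chain_metric_diameter_bound:
  assumes mono: "\<And>n. T n \<subseteq> T (Suc n)"
    and meets: "\<And>a b. a < b \<Longrightarrow> \<exists>n. {a<..b} \<inter> T n \<noteq> {}"
    and "U \<noteq> {}"
    and gap: "\<And>u v. u \<in> U \<Longrightarrow> v \<in> U \<Longrightarrow> {min u v<..max u v} \<inter> T n = {}"
  shows "Sup {chain_metric T x y | x y. x \<in> U \<and> y \<in> U} \<le> 1 / real (Suc n)"
proof (rule cSup_least)
  show "{chain_metric T x y | x y. x \<in> U \<and> y \<in> U} \<noteq> {}"
    using \<open>U \<noteq> {}\<close> by blast
next
  fix d assume "d \<in> {chain_metric T x y | x y. x \<in> U \<and> y \<in> U}"
  then obtain u v where uv: "u \<in> U" "v \<in> U" and d: "d = chain_metric T u v"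
    by blast
  show "d \<le> 1 / real (Suc n)"
  proof (cases "u = v")
    case True
    then show ?thesis
      using d by (simp add: chain_metric_def)
  next
    case False
    then have "min u v < max u v"
      by (auto simp: min_def max_def)
    then have "\<exists>k. {min u v<..max u v} \<inter> T k \<noteq> {}"
      by (rule meets)
    from False this gap[OF uv] show ?thesis
      unfolding d by (rule chain_metric_upper[of T, OF mono])
  qed
qed

text \<open>For the least point p of a nonempty closed set L, the neighbourhood W of p
  from the well-ordering of level n cuts out the small relatively open set L \<inter> W;
  hence the chain metric fragments the compact completion.\<close>
lemma chain_metric_fragments:
  fixes T :: "nat \<Rightarrow> 'a::linorder_topology set"
  assumes mono: "\<And>n. T n \<subseteq> T (Suc n)"
    and wo: "\<And>n. well_ordered_set (T n)"
    and meets: "\<And>a b. a < b \<Longrightarrow> \<exists>n. {a<..b} \<inter> T n \<noteq> {}"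
    and cpt: "compact (UNIV :: 'a set)"
  shows "fragments (chain_metric T) (UNIV :: 'a set)"
  unfolding fragments_def
proof (intro allI impI)
  fix L :: "'a set" and \<epsilon> :: real
  assume L: "closedin (top_of_set UNIV) L" "L \<noteq> {}" and "0 < \<epsilon>"
  have "closed L"
    using L(1) closed_closedin subtopology_UNIV by metis
  then have "compact L"
    using compact_Int_closed[OF cpt] by simp
  then obtain p where p: "p \<in> L" "\<forall>y\<in>L. p \<le> y"
    using compact_attains_inf[OF \<open>compact L\<close> L(2)] by blast
  obtain n where "inverse (real (Suc n)) < \<epsilon>"
    using reals_Archimedean[OF \<open>0 < \<epsilon>\<close>] by blast
  then have small: "1 / real (Suc n) < \<epsilon>"
    by (simp add: inverse_eq_divide)
  obtain W where W: "open W" "p \<in> W" "\<And>w. w \<in> W \<Longrightarrow> {p<..w} \<inter> T n = {}"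
    using well_ordered_right_gap[OF wo[of n], where p = p] by blast
  have gap: "{min u v<..max u v} \<inter> T n = {}" if "u \<in> L \<inter> W" "v \<in> L \<inter> W" for u v
  proof -
    have "max u v \<in> W"
      using that by (simp add: max_def)
    have "p \<le> min u v"
      using p(2) that by simp
    then have "{min u v<..max u v} \<subseteq> {p<..max u v}"
      by (auto dest: le_less_trans[OF \<open>p \<le> min u v\<close>])
    with W(3)[OF \<open>max u v \<in> W\<close>] show ?thesis
      by blast
  qed
  have "L \<inter> W \<noteq> {}"
    using p(1) W(2) by blast
  then have "Sup {chain_metric T x y | x y. x \<in> L \<inter> W \<and> y \<in> L \<inter> W} \<le> 1 / real (Suc n)"
    by (intro chain_metric_diameter_bound mono meets gap)
  with small have "Sup {chain_metric T x y | x y. x \<in> L \<inter> W \<and> y \<in> L \<inter> W} < \<epsilon>"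
    by linarith
  moreover have "openin (top_of_set L) (L \<inter> W)"
    using W(1) by (simp add: openin_open_Int)
  ultimately show "\<exists>U. openin (top_of_set L) U \<and> U \<noteq> {} \<and>
      Sup {chain_metric T x y | x y. x \<in> U \<and> y \<in> U} < \<epsilon>"
    using \<open>L \<inter> W \<noteq> {}\<close> by blast
qed

theorem mainTheorem10:
  fixes T :: "nat \<Rightarrow> 'a::linorder_topology set"
  assumes mono: "\<And>n. T n \<subseteq> T (Suc n)"
    and wo: "\<And>n. well_ordered_set (T n)"
    and minmax: "\<exists>m M. \<forall>n. m \<in> T n \<and> M \<in> T n \<and> (\<forall>x\<in>T n. m \<le> x \<and> x \<le> M)"
    and compl: "is_completion_of (\<Union>n. T n)"
  shows "(\<forall>x y::'a. x < y \<longrightarrow> (\<exists>n. {x<..y} \<inter> T n \<noteq> {}))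
    \<and> (\<forall>x y. chain_metric T x y \<ge> 0)
    \<and> (\<forall>x y. chain_metric T x y = 0 \<longleftrightarrow> x = y)
    \<and> (\<forall>x y. chain_metric T x y = chain_metric T y x)
    \<and> (\<forall>x y z. chain_metric T x z \<le> chain_metric T x y + chain_metric T y z)
    \<and> (\<forall>x y. x \<noteq> y \<longrightarrow> (\<exists>U V. open U \<and> x \<in> U \<and> open V \<and> y \<in> V \<and>
          Inf {chain_metric T u v | u v. u \<in> U \<and> v \<in> V} > 0))
    \<and> fragments (chain_metric T) (UNIV :: 'a set)"
proof -
  have meets: "\<And>x y::'a. x < y \<Longrightarrow> \<exists>n. {x<..y} \<inter> T n \<noteq> {}"
    using compl by (rule completion_interval_meets_level)
  have "compact (UNIV :: 'a set)"
    using compl unfolding is_completion_of_def by blast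
  with mono wo meets have fragmenting: "fragments (chain_metric T) (UNIV :: 'a set)"
    by (rule chain_metric_fragments)
  show ?thesis
  proof (intro conjI)
    show "\<forall>x y::'a. x < y \<longrightarrow> (\<exists>n. {x<..y} \<inter> T n \<noteq> {})"
      by (intro allI impI) (rule meets)
    show "\<forall>x y. chain_metric T x y \<ge> 0"
      by (intro allI) (rule chain_metric_nonneg)
    show "\<forall>x y. chain_metric T x y = 0 \<longleftrightarrow> x = y"
      by (intro allI) (rule chain_metric_eq_0_iff)
    show "\<forall>x y. chain_metric T x y = chain_metric T y x"
      by (intro allI) (rule chain_metric_sym)
    show "\<forall>x y z. chain_metric T x z \<le> chain_metric T x y + chain_metric T y z"
      by (intro allI chain_metric_triangle meets)
    show "\<forall>x y. x \<noteq> y \<longrightarrow> (\<exists>U V. open U \<and> x \<in> U \<and> open V \<and> y \<in> V \<and>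
          Inf {chain_metric T u v | u v. u \<in> U \<and> v \<in> V} > 0)"
      by (intro allI impI) (rule chain_metric_reznichenko[OF compl])
  qed (rule fragmenting)
qed

end
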